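(* For integers $b\ge a\ge 0$, $$\sum_{\substack{\pi\in\mathcal I_{a+b}(321)\\ \mathrm{fp}(\pi)\ge b-a}} q^{\mathrm{maj}(\pi)}=\binom{a+b}{a}_q.$$ Consequently, for integers $0\le \ell\le n$ with $\ell\equiv n\pmod 2$, $$\sum_{\substack{\pi\in\mathcal I_{n}(321)\\ \mathrm{fp}(\pi)=\ell}} q^{\mathrm{maj}(\pi)}=\binom{n}{\frac{n-\ell}{2}}_q-\binom{n}{\frac{n-\ell}{2}-1}_q,$$ with the convention that $\binom{n}{-1}_q=0$.
   Context: $\mathcal I_m(321)$ is the set of involutions in $\mathcal S_m$ avoiding $321$; $\mathrm{fp}(\pi)$ is its number of fixed points; $\mathrm{maj}(\pi)=\sum_{i:\pi(i)>\pi(i+1)} i$ is the major index. $\binom{n}{k}_q$ is the Gaussian binomial coefficient. *)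

theory Defs
  imports "HOL-Combinatorics.Permutations"
begin

fun qbinom :: "'a::comm_semiring_1 \<Rightarrow> nat \<Rightarrow> nat \<Rightarrow> 'a" where
  "qbinom q n 0 = 1"
| "qbinom q 0 (Suc k) = 0"
| "qbinom q (Suc n) (Suc k) = qbinom q n k + q ^ Suc k * qbinom q n (Suc k)"

definition involution :: "(nat \<Rightarrow> nat) \<Rightarrow> bool" where
  "involution \<pi> \<longleftrightarrow> \<pi> \<circ> \<pi> = id"

definition avoids321 :: "nat \<Rightarrow> (nat \<Rightarrow> nat) \<Rightarrow> bool" where
  "avoids321 m \<pi> \<longleftrightarrow>
     \<not> (\<exists>i j k. 1 \<le> i \<and> i < j \<and> j < k \<and> k \<le> m \<and> \<pi> i > \<pi> j \<and> \<pi> j > \<pi> k)"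

definition inv321 :: "nat \<Rightarrow> (nat \<Rightarrow> nat) set" where
  "inv321 m = {\<pi>. \<pi> permutes {1..m} \<and> involution \<pi> \<and> avoids321 m \<pi>}"

definition fp :: "nat \<Rightarrow> (nat \<Rightarrow> nat) \<Rightarrow> nat" where
  "fp m \<pi> = card {i \<in> {1..m}. \<pi> i = i}"

definition maj :: "nat \<Rightarrow> (nat \<Rightarrow> nat) \<Rightarrow> nat" where
  "maj m \<pi> = (\<Sum>i \<in> {i. 1 \<le> i \<and> i < m \<and> \<pi> i > \<pi> (Suc i)}. i)"

end

theory Submission
  imports Defs
begin

text \<open>Record an involution \<open>\<pi>\<close> of \<open>[m]\<close> as the word of steps \<open>Up\<close> at \<open>i < \<pi> i\<close>, \<open>Down\<close> at
  \<open>\<pi> i < i\<close> and \<open>Flat\<close> at fixed points. For a 321-avoiding involution the arcs \<open>i \<mapsto> \<pi> i\<close> are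
  nested first-in-first-out and no fixed point lies under an arc, so its word is a path that never
  goes below the ground, ends on it, and has flat steps only on the ground; conversely \<open>\<pi>\<close> is
  recovered from such a path by matching the \<open>k\<close>-th \<open>Up\<close> with the \<open>k\<close>-th \<open>Down\<close>. Descents of
  \<open>\<pi>\<close> are exactly the peaks \<open>Up Down\<close> of its path, and fixed points are flat steps.
  Appending one step at a time gives Pascal-type recurrences for the major-index generating
  function of paths with \<open>d\<close> down steps, which are solved by the q-ballot numbers
  \<open>[n, d]\<^sub>q - [n, d - 1]\<^sub>q\<close>; the first identity follows by telescoping over \<open>d \<le> a\<close>.\<close>

section \<open>Gaussian binomial coefficients and q-ballot numbers\<close>

lemma qbinom_eq_0: "n < k \<Longrightarrow> qbinom q n k = 0"
proof (induction n arbitrary: k)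
  case 0 then show ?case by (cases k) auto
next
  case (Suc n) then show ?case by (cases k) auto
qed

lemma qbinom_same [simp]: "qbinom q n n = 1"
  by (induction n) (auto simp: qbinom_eq_0)

lemma qbinom_Suc_1: "qbinom q (Suc n) (Suc 0) = (\<Sum>i\<le>n. q ^ i)"
  by (induction n) (simp_all add: sum.atMost_Suc_shift sum_distrib_left del: sum.atMost_Suc)

lemma qbinom_Suc_Suc_dual:
  "qbinom q (Suc n) (Suc k) = q ^ (n - k) * qbinom q n k + qbinom q n (Suc k)"
proof (induction n arbitrary: k)
  case 0
  then show ?case by (cases k) auto
next
  case (Suc n)
  show ?case
  proof (cases k)
    case 0
    then show ?thesis
      by (simp add: qbinom_Suc_1 add.commute del: qbinom.simps(3))
  next
    case (Suc k')
    show ?thesis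
    proof (cases "k' < n")
      case True
      then obtain j where n: "n = Suc k' + j"
        using less_imp_Suc_add by blast
      define a b c where "a = qbinom q n k'" and "b = qbinom q n (Suc k')"
        and "c = qbinom q n (Suc (Suc k'))"
      define x y where "x = qbinom q (Suc n) (Suc k')" and "y = qbinom q (Suc n) (Suc (Suc k'))"
      have x_dual: "x = q ^ Suc j * a + b" and y_dual: "y = q ^ j * b + c"
        using Suc.IH[of k'] Suc.IH[of "Suc k'"] n by (simp_all add: x_def y_def a_def b_def c_def)
      have x_pascal: "x = a + q ^ Suc k' * b" and y_pascal: "y = b + q ^ Suc (Suc k') * c"
        by (simp_all add: x_def y_def a_def b_def c_def)
      have "qbinom q (Suc (Suc n)) (Suc (Suc k')) = x + q ^ Suc (Suc k') * y"
        by (simp add: x_def y_def)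
      also have "\<dots> = q ^ Suc j * a + b + q ^ Suc (Suc k') * (q ^ j * b + c)"
        by (simp add: x_dual y_dual)
      also have "\<dots> = q ^ Suc j * (a + q ^ Suc k' * b) + (b + q ^ Suc (Suc k') * c)"
        by (simp add: algebra_simps flip: power_add)
      also have "\<dots> = q ^ (Suc n - k) * x + y"
        using n Suc by (simp add: x_pascal y_pascal)
      finally show ?thesis
        using Suc by (simp add: x_def y_def)
    next
      case False
      then show ?thesis
        using Suc by (cases "k' = n") (auto simp: qbinom_eq_0)
    qed
  qed
qed

lemma qbinom_symmetric: "k \<le> n \<Longrightarrow> qbinom q n k = qbinom q n (n - k)"
proof (induction n arbitrary: k)
  case 0
  then show ?case by simp
next
  case (Suc n)
  show ?case
  proof (cases k)
    case 0
    then show ?thesis by simp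
  next
    case (Suc k')
    show ?thesis
    proof (cases "k' = n")
      case True
      with Suc show ?thesis by simp
    next
      case False
      with Suc \<open>k \<le> Suc n\<close> obtain j where j: "n = Suc k' + j"
        using less_imp_Suc_add by fastforce
      have "qbinom q (Suc n) (Suc n - k) = q ^ Suc k' * qbinom q n j + qbinom q n (Suc j)"
        using qbinom_Suc_Suc_dual[of q n j] j Suc by simp
      also have "qbinom q n j = qbinom q n (Suc k')"
        using Suc.IH[of "Suc k'"] j by simp
      also have "qbinom q n (Suc j) = qbinom q n k'"
        using Suc.IH[of k'] j by simp
      finally show ?thesis
        using Suc by (simp add: add.commute)
    qed
  qed
qed

lemma qbinom_Suc_diff:
  fixes q :: "'a::comm_ring_1"
  shows "qbinom q (Suc n) (Suc k) - qbinom q n (Suc k) = q ^ (n - k) * qbinom q n k"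
  by (subst qbinom_Suc_Suc_dual) (rule add_diff_cancel_right')

definition qballot :: "'a::comm_ring_1 \<Rightarrow> nat \<Rightarrow> nat \<Rightarrow> 'a" where
  "qballot q n d = qbinom q n d - (if d = 0 then 0 else qbinom q n (d - 1))"

lemma sum_qballot: "(\<Sum>d\<le>a. qballot q n d) = qbinom q n a"
  by (induction a) (auto simp: qballot_def)

lemma qballot_eq_0: "1 \<le> d \<Longrightarrow> qballot q (2 * d - 1) d = 0"
  using qbinom_symmetric[of d "2 * d - 1" q] by (simp add: qballot_def)

lemma qballot_Suc_Suc_diff:
  assumes "d \<le> Suc p"
  shows "qballot q (Suc (Suc p)) (Suc d) - qballot q (Suc p) (Suc d)
           = q ^ Suc p * qballot q p d + (qballot q (Suc p) d - qballot q p d)"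
proof (cases d)
  case 0
  then show ?thesis
    using qbinom_Suc_diff[of q "Suc p" 0] by (simp add: qballot_def)
next
  case (Suc e)
  with assms obtain j where p: "p = e + j"
    using le_Suc_ex by fastforce
  have shifted: "q ^ Suc j * qbinom q (Suc p) e = q ^ Suc p * qbinom q p e + (qbinom q (Suc p) e - qbinom q p e)"
  proof (cases e)
    case (Suc e')
    have "q ^ Suc j * qbinom q (Suc p) e = q ^ Suc j * qbinom q p e' + q ^ Suc p * qbinom q p e"
      using Suc p by (simp add: algebra_simps power_add)
    also have "q ^ Suc j * qbinom q p e' = qbinom q (Suc p) e - qbinom q p e"
      using qbinom_Suc_diff[of q p e'] Suc p by simp
    finally show ?thesis by simp
  qed (use p in simp)
  have "qballot q (Suc (Suc p)) (Suc d) - qballot q (Suc p) (Suc d)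
          = (qbinom q (Suc (Suc p)) (Suc d) - qbinom q (Suc p) (Suc d))
            - (qbinom q (Suc (Suc p)) d - qbinom q (Suc p) d)"
    using Suc by (simp add: qballot_def algebra_simps del: qbinom.simps(3))
  also have "\<dots> = q ^ j * qbinom q (Suc p) (Suc e) - q ^ Suc j * qbinom q (Suc p) e"
    using Suc p by (simp only: qbinom_Suc_diff) simp
  also have "\<dots> = q ^ j * qbinom q p e + q ^ Suc p * qbinom q p (Suc e)
                     - q ^ Suc j * qbinom q (Suc p) e"
    using p by (simp add: algebra_simps power_add)
  also have "\<dots> = q ^ Suc p * qballot q p d + (qballot q (Suc p) d - qballot q p d)"
    using shifted qbinom_Suc_diff[of q p e] Suc p by (simp add: qballot_def algebra_simps del: qbinom.simps(3))
  finally show ?thesis .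
qed

section \<open>Paths with flat steps on the ground\<close>

datatype step = Up | Down | Flat

definition admissible :: "step list \<Rightarrow> bool" where
  "admissible xs \<longleftrightarrow>
     (\<forall>t \<le> length xs. count_list (take t xs) Down \<le> count_list (take t xs) Up) \<and>
     (\<forall>i < length xs. xs ! i = Flat \<longrightarrow> count_list (take i xs) Up = count_list (take i xs) Down)"

definition paths :: "nat \<Rightarrow> nat \<Rightarrow> nat \<Rightarrow> step list set" where
  "paths n d h = {xs. length xs = n \<and> admissible xs \<and> count_list xs Down = d \<and> count_list xs Up = d + h}"

definition word_maj :: "step list \<Rightarrow> nat" where
  "word_maj xs = \<Sum> {i. 1 \<le> i \<and> i < length xs \<and> xs ! (i - 1) = Up \<and> xs ! i = Down}"

definition ends_down :: "step list \<Rightarrow> bool" where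
  "ends_down xs \<longleftrightarrow> xs \<noteq> [] \<and> last xs = Down"

text \<open>Appending \<open>Down\<close> creates a new peak exactly after an \<open>Up\<close> step, hence the split by the last step.\<close>

definition gf_ends_down :: "'a::comm_ring_1 \<Rightarrow> nat \<Rightarrow> nat \<Rightarrow> nat \<Rightarrow> 'a" where
  "gf_ends_down q n d h = (\<Sum>xs \<in> {xs \<in> paths n d h. ends_down xs}. q ^ word_maj xs)"

definition gf_ends_other :: "'a::comm_ring_1 \<Rightarrow> nat \<Rightarrow> nat \<Rightarrow> nat \<Rightarrow> 'a" where
  "gf_ends_other q n d h = (\<Sum>xs \<in> {xs \<in> paths n d h. \<not> ends_down xs}. q ^ word_maj xs)"

lemma UNIV_step: "UNIV = {Up, Down, Flat}"
  using step.exhaust by auto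

lemma finite_step_lists: "finite {xs :: step list. length xs = n}"
proof -
  have "finite (UNIV :: step set)"
    by (simp add: UNIV_step)
  from finite_lists_length_eq[OF this, of n] show ?thesis
    by simp
qed

lemma finite_paths: "finite (paths n d h)"
  by (rule finite_subset[OF _ finite_step_lists[of n]]) (auto simp: paths_def)

lemma admissible_count_le: "admissible xs \<Longrightarrow> count_list xs Down \<le> count_list xs Up"
  unfolding admissible_def by (metis order_refl take_all)

lemma admissible_snoc:
  "admissible (xs @ [x]) \<longleftrightarrow> admissible xs
     \<and> (x = Down \<longrightarrow> count_list xs Down < count_list xs Up)
     \<and> (x = Flat \<longrightarrow> count_list xs Up = count_list xs Down)"
proof -
  have prefixes: "(\<forall>t \<le> length (xs @ [x]). count_list (take t (xs @ [x])) Down \<le> count_list (take t (xs @ [x])) Up)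
      \<longleftrightarrow> (\<forall>t \<le> length xs. count_list (take t xs) Down \<le> count_list (take t xs) Up)
          \<and> count_list (xs @ [x]) Down \<le> count_list (xs @ [x]) Up"
    by (auto simp: le_Suc_eq)
  have flats: "(\<forall>i < length (xs @ [x]). (xs @ [x]) ! i = Flat \<longrightarrow>
        count_list (take i (xs @ [x])) Up = count_list (take i (xs @ [x])) Down)
      \<longleftrightarrow> (\<forall>i < length xs. xs ! i = Flat \<longrightarrow> count_list (take i xs) Up = count_list (take i xs) Down)
          \<and> (x = Flat \<longrightarrow> count_list xs Up = count_list xs Down)"
    by (auto simp: less_Suc_eq nth_append)
  show ?thesis
    unfolding admissible_def[of "xs @ [x]"] prefixes flats
    using admissible_count_le[of xs] unfolding admissible_def[of xs]
    by (cases x) auto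
qed

lemma word_maj_snoc:
  "word_maj (xs @ [x]) = word_maj xs + (if x = Down \<and> xs \<noteq> [] \<and> last xs = Up then length xs else 0)"
proof -
  let ?S = "\<lambda>zs. {i. 1 \<le> i \<and> i < length zs \<and> zs ! (i - 1) = Up \<and> zs ! i = Down}"
  have "?S (xs @ [x]) = ?S xs \<union> (if x = Down \<and> xs \<noteq> [] \<and> last xs = Up then {length xs} else {})"
    by (cases "xs = []") (auto simp: nth_append less_Suc_eq last_conv_nth)
  moreover have "finite (?S xs)"
    by (rule finite_subset[of _ "{..<length xs}"]) auto
  ultimately show ?thesis
    unfolding word_maj_def by auto
qed

lemma sum_paths: "(\<Sum>xs \<in> paths n d h. q ^ word_maj xs) = gf_ends_down q n d h + gf_ends_other q n d h"
  unfolding gf_ends_down_def gf_ends_other_def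
  using sum.Int_Diff[OF finite_paths, of "\<lambda>xs. q ^ word_maj xs" n d h "Collect ends_down"]
  by (simp add: Int_def set_diff_eq)

lemma paths_Suc_not_ends_down:
  "{xs \<in> paths (Suc n) d h. \<not> ends_down xs} = (\<lambda>ys. ys @ [if h = 0 then Flat else Up]) ` paths n d (h - 1)"
proof (intro set_eqI iffI)
  fix xs
  assume "xs \<in> {xs \<in> paths (Suc n) d h. \<not> ends_down xs}"
  then obtain ys x where xs: "xs = ys @ [x]" and len: "length ys = n" and "x \<noteq> Down"
      and adm: "admissible (ys @ [x])" and counts: "count_list xs Down = d" "count_list xs Up = d + h"
    by (auto simp: paths_def ends_down_def length_Suc_conv_rev)
  then consider "x = Up" "h \<noteq> 0" | "x = Flat" "h = 0"
    using admissible_snoc[of ys x] admissible_count_le[of ys] by (cases x) auto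
  then show "xs \<in> (\<lambda>ys. ys @ [if h = 0 then Flat else Up]) ` paths n d (h - 1)"
    by cases (use xs len adm counts admissible_snoc in \<open>force simp: paths_def\<close>)+
qed (auto simp: paths_def ends_down_def admissible_snoc split: if_splits)

lemma paths_Suc_ends_down:
  "{xs \<in> paths (Suc n) (Suc d) h. ends_down xs} = (\<lambda>ys. ys @ [Down]) ` paths n d (Suc h)"
proof (intro set_eqI iffI)
  fix xs
  assume "xs \<in> {xs \<in> paths (Suc n) (Suc d) h. ends_down xs}"
  then obtain ys where "xs = ys @ [Down]" "length ys = n" "admissible (ys @ [Down])"
      "count_list xs Down = Suc d" "count_list xs Up = Suc d + h"
    by (auto simp: paths_def ends_down_def length_Suc_conv_rev)
  then show "xs \<in> (\<lambda>ys. ys @ [Down]) ` paths n d (Suc h)"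
    by (auto simp: paths_def admissible_snoc)
qed (auto simp: paths_def ends_down_def admissible_snoc)

lemma paths_0_not_ends_down: "xs \<in> paths n 0 h \<Longrightarrow> \<not> ends_down xs"
  using last_in_set by (fastforce simp: paths_def ends_down_def count_list_0_iff)

lemma paths_ends_Up:
  assumes "ys \<in> paths n d (Suc h)" and "\<not> ends_down ys"
  shows "ys \<noteq> [] \<and> last ys = Up"
proof -
  obtain zs x where ys: "ys = zs @ [x]"
    using assms(1) by (cases ys rule: rev_cases) (auto simp: paths_def)
  have "x \<noteq> Flat"
    using assms(1) admissible_snoc[of zs Flat] by (auto simp: ys paths_def)
  with assms(2) ys show ?thesis
    by (cases x) (auto simp: ends_down_def)
qed

lemma sum_snoc_image: "(\<Sum>xs \<in> (\<lambda>ys. ys @ [x]) ` A. f xs) = (\<Sum>ys \<in> A. f (ys @ [x]))"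
  by (subst sum.reindex) (auto simp: inj_on_def)

lemma gf_ends_other_Suc:
  "gf_ends_other q (Suc n) d h = gf_ends_down q n d (h - 1) + gf_ends_other q n d (h - 1)"
proof -
  have "gf_ends_other q (Suc n) d h = (\<Sum>ys \<in> paths n d (h - 1). q ^ word_maj ys)"
    unfolding gf_ends_other_def paths_Suc_not_ends_down sum_snoc_image
    by (simp add: word_maj_snoc)
  then show ?thesis
    by (simp add: sum_paths)
qed

lemma gf_ends_down_0: "gf_ends_down q n 0 h = 0"
proof -
  have none: "{xs \<in> paths n 0 h. ends_down xs} = {}"
    using paths_0_not_ends_down by blast
  show ?thesis
    unfolding gf_ends_down_def none by simp
qed

lemma gf_ends_down_Suc:
  "gf_ends_down q (Suc n) (Suc d) h = q ^ n * gf_ends_other q n d (Suc h) + gf_ends_down q n d (Suc h)"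
proof -
  have "gf_ends_down q (Suc n) (Suc d) h = (\<Sum>ys \<in> paths n d (Suc h). q ^ word_maj (ys @ [Down]))"
    unfolding gf_ends_down_def paths_Suc_ends_down sum_snoc_image ..
  also have "\<dots> = (\<Sum>ys \<in> paths n d (Suc h). if ends_down ys then q ^ word_maj ys else q ^ n * q ^ word_maj ys)"
  proof (rule sum.cong)
    fix ys
    assume "ys \<in> paths n d (Suc h)"
    then show "q ^ word_maj (ys @ [Down])
        = (if ends_down ys then q ^ word_maj ys else q ^ n * q ^ word_maj ys)"
      using paths_ends_Up[of ys n d h]
      by (auto simp: word_maj_snoc power_add mult.commute paths_def ends_down_def)
  qed simp
  finally show ?thesis
    unfolding gf_ends_down_def gf_ends_other_def
    by (simp add: sum.If_cases[OF finite_paths] sum_distrib_left Int_def set_diff_eq)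
qed

lemma paths_0: "paths 0 d h = (if d = 0 \<and> h = 0 then {[]} else {})"
  by (auto simp: paths_def admissible_def)

lemma gf_closed_form:
  fixes q :: "'a::comm_ring_1"
  shows "gf_ends_other q n d h = (if 2 * d + h \<le> n then qballot q (n - 1) d else 0)
       \<and> gf_ends_down q n d h = (if 2 * d + h \<le> n then qballot q n d - qballot q (n - 1) d else 0)"
proof (induction n arbitrary: d h)
  case 0
  have down: "{xs \<in> paths 0 d h. ends_down xs} = {}"
    and other: "{xs \<in> paths 0 d h. \<not> ends_down xs} = (if d = 0 \<and> h = 0 then {[]} else {})"
    by (auto simp: paths_0 ends_down_def)
  show ?case
    unfolding gf_ends_other_def gf_ends_down_def down other
    by (simp add: word_maj_def qballot_def)
next
  case (Suc n)
  have other: "gf_ends_other q (Suc n) d h = (if 2 * d + h \<le> Suc n then qballot q n d else 0)"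
  proof -
    have "gf_ends_other q (Suc n) d h = (if 2 * d + (h - 1) \<le> n then qballot q n d else 0)"
      using Suc.IH[of d "h - 1"] by (simp add: gf_ends_other_Suc)
    moreover have "qballot q n d = 0" if "h = 0" "2 * d = Suc n"
      using that qballot_eq_0[of d q] by simp
    ultimately show ?thesis
      by auto
  qed
  have down: "gf_ends_down q (Suc n) d h
      = (if 2 * d + h \<le> Suc n then qballot q (Suc n) d - qballot q n d else 0)"
  proof (cases d)
    case 0
    then show ?thesis
      by (simp add: gf_ends_down_0 qballot_def)
  next
    case (Suc e)
    have "gf_ends_down q (Suc n) d h
        = (if 2 * e + Suc h \<le> n then q ^ n * qballot q (n - 1) e + (qballot q n e - qballot q (n - 1) e) else 0)"
      using Suc.IH[of e "Suc h"] Suc by (simp add: gf_ends_down_Suc)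
    moreover have "q ^ n * qballot q (n - 1) e + (qballot q n e - qballot q (n - 1) e)
        = qballot q (Suc n) d - qballot q n d" if "2 * e + Suc h \<le> n"
    proof -
      from that obtain p where "n = Suc p"
        using not0_implies_Suc by fastforce
      with that Suc show ?thesis
        using qballot_Suc_Suc_diff[of e p q] by simp
    qed
    ultimately show ?thesis
      using Suc by auto
  qed
  from other down show ?case
    by simp
qed

lemma sum_paths_ground:
  "2 * d \<le> n \<Longrightarrow> (\<Sum>xs \<in> paths n d 0. (q::'a::comm_ring_1) ^ word_maj xs) = qballot q n d"
  using gf_closed_form[of q n d 0] by (simp add: sum_paths)

section \<open>321-avoiding involutions as balanced paths\<close>

definition count_upto :: "(nat \<Rightarrow> step) \<Rightarrow> step \<Rightarrow> nat \<Rightarrow> nat" where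
  "count_upto g x t = card {i \<in> {1..t}. g i = x}"

lemma count_upto_0 [simp]: "count_upto g x 0 = 0"
  by (simp add: count_upto_def)

lemma count_upto_Suc: "count_upto g x (Suc t) = count_upto g x t + (if g (Suc t) = x then 1 else 0)"
proof -
  have "{i \<in> {1..Suc t}. g i = x} = {i \<in> {1..t}. g i = x} \<union> (if g (Suc t) = x then {Suc t} else {})"
    by (auto simp: le_Suc_eq)
  then show ?thesis
    by (simp add: count_upto_def)
qed

lemma count_upto_mono: "t \<le> t' \<Longrightarrow> count_upto g x t \<le> count_upto g x t'"
  unfolding count_upto_def by (rule card_mono) auto

lemma count_upto_strict_mono:
  assumes "t < t'" and "g t' = x"
  shows "count_upto g x t < count_upto g x t'"
  unfolding count_upto_def
proof (rule psubset_card_mono)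
  have "t' \<in> {i \<in> {1..t'}. g i = x} - {i \<in> {1..t}. g i = x}"
    using assms by auto
  moreover have "{i \<in> {1..t}. g i = x} \<subseteq> {i \<in> {1..t'}. g i = x}"
    using assms by auto
  ultimately show "{i \<in> {1..t}. g i = x} \<subset> {i \<in> {1..t'}. g i = x}"
    by blast
qed simp

lemma count_upto_cong:
  "(\<And>i. 1 \<le> i \<Longrightarrow> i \<le> t \<Longrightarrow> g i = g' i) \<Longrightarrow> count_upto g x t = count_upto g' x t"
  unfolding count_upto_def by (rule arg_cong[where f = card]) auto

definition step_at :: "step list \<Rightarrow> nat \<Rightarrow> step" where
  "step_at xs i = xs ! (i - 1)"

lemma count_list_take: "t \<le> length xs \<Longrightarrow> count_list (take t xs) x = count_upto (step_at xs) x t"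
proof (induction t)
  case (Suc t)
  then show ?case
    by (simp add: take_Suc_conv_app_nth count_upto_Suc step_at_def)
qed simp

lemma Least_count_upto:
  assumes "1 \<le> r" and "r \<le> count_upto g x T" and c_def: "c = (LEAST c. r \<le> count_upto g x c)"
  shows "1 \<le> c \<and> c \<le> T \<and> count_upto g x c = r \<and> g c = x"
proof -
  have reached: "r \<le> count_upto g x c"
    unfolding c_def by (rule LeastI[of _ T]) (rule assms(2))
  have "c \<le> T"
    unfolding c_def by (rule Least_le) (rule assms(2))
  have "c \<noteq> 0"
    using reached assms(1) by (intro notI) simp
  then obtain c' where c': "c = Suc c'"
    using not0_implies_Suc by blast
  have "\<not> r \<le> count_upto g x c'"
  proof
    assume "r \<le> count_upto g x c'"
    then have "c \<le> c'"
      unfolding c_def by (rule Least_le)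
    with c' show False
      by simp
  qed
  with reached c' have "count_upto g x c = r \<and> g c = x"
    using count_upto_Suc[of g x c'] by (auto split: if_splits)
  with \<open>c \<le> T\<close> c' show ?thesis
    by simp
qed

definition ballot_seq :: "nat \<Rightarrow> (nat \<Rightarrow> step) \<Rightarrow> bool" where
  "ballot_seq m g \<longleftrightarrow>
     (\<forall>t \<le> m. count_upto g Down t \<le> count_upto g Up t)
     \<and> (\<forall>i \<in> {1..m}. g i = Flat \<longrightarrow> count_upto g Up (i - 1) = count_upto g Down (i - 1))
     \<and> count_upto g Up m = count_upto g Down m"

definition balanced :: "nat \<Rightarrow> step list set" where
  "balanced m = {xs. length xs = m \<and> admissible xs \<and> count_list xs Up = count_list xs Down}"

lemma balanced_iff_ballot_seq:
  "xs \<in> balanced m \<longleftrightarrow> length xs = m \<and> ballot_seq m (step_at xs)"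
proof (cases "length xs = m")
  case True
  let ?g = "step_at xs"
  have prefix: "count_list (take t xs) x = count_upto ?g x t" if "t \<le> m" for t x
    using count_list_take[of t xs x] that True by simp
  have "(\<forall>t \<le> length xs. count_list (take t xs) Down \<le> count_list (take t xs) Up)
      \<longleftrightarrow> (\<forall>t \<le> m. count_upto ?g Down t \<le> count_upto ?g Up t)"
    using True prefix by simp
  moreover have "(\<forall>i < length xs. xs ! i = Flat \<longrightarrow> count_list (take i xs) Up = count_list (take i xs) Down)
      \<longleftrightarrow> (\<forall>i \<in> {1..m}. ?g i = Flat \<longrightarrow> count_upto ?g Up (i - 1) = count_upto ?g Down (i - 1))"
  proof -
    have "(\<forall>i < m. P i) \<longleftrightarrow> (\<forall>i \<in> {1..m}. P (i - 1))" for P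
    proof
      assume "\<forall>i \<in> {1..m}. P (i - 1)"
      then have "P (Suc i - 1)" if "i < m" for i
        using that by (metis Suc_le_eq atLeastAtMost_iff le_add1 plus_1_eq_Suc)
      then show "\<forall>i < m. P i"
        by simp
    qed auto
    then show ?thesis
      using True prefix by (simp add: step_at_def)
  qed
  moreover have "count_list xs x = count_upto ?g x m" for x
    using prefix[of m x] True by simp
  ultimately show ?thesis
    unfolding balanced_def admissible_def ballot_seq_def using True by simp
qed (simp add: balanced_def)

definition step_of :: "(nat \<Rightarrow> nat) \<Rightarrow> nat \<Rightarrow> step" where
  "step_of p i = (if p i = i then Flat else if i < p i then Up else Down)"

lemma step_of_Up: "step_of p i = Up \<longleftrightarrow> i < p i"
  and step_of_Down: "step_of p i = Down \<longleftrightarrow> p i < i"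
  and step_of_Flat: "step_of p i = Flat \<longleftrightarrow> p i = i"
  by (auto simp: step_of_def)

lemma avoids321I:
  assumes Up_mono: "\<And>a b. a < b \<Longrightarrow> a < p a \<Longrightarrow> b < p b \<Longrightarrow> p a < p b"
    and Down_mono: "\<And>a b. a < b \<Longrightarrow> p a < a \<Longrightarrow> p b < b \<Longrightarrow> p a < p b"
    and no_fixed_inside: "\<And>a f. a < f \<Longrightarrow> f < p a \<Longrightarrow> p f \<noteq> f"
  shows "avoids321 m p"
  unfolding avoids321_def
proof (intro notI, elim exE conjE)
  fix i j k
  assume ij: "i < j" and jk: "j < k" and "k \<le> m" "1 \<le> i"
    and pij: "p j < p i" and pjk: "p k < p j"
  consider (fixed) "p j = j" | (up) "j < p j" | (down) "p j < j"
    by linarith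
  then show False
  proof cases
    case fixed
    with ij pij no_fixed_inside[of i j] show False by simp
  next
    case up
    with ij pij Up_mono[of i j] show False by simp
  next
    case down
    with jk pjk Down_mono[of j k] show False by simp
  qed
qed

context
  fixes m :: nat and p :: "nat \<Rightarrow> nat"
  assumes p: "p \<in> inv321 m"
begin

lemma inv321_permutes: "p permutes {1..m}"
  using p by (simp add: inv321_def)

lemma inv321_involution [simp]: "p (p i) = i"
  using p by (simp add: inv321_def involution_def fun_eq_iff)

lemma inv321_inj: "inj p"
  by (metis inv321_involution injI)

lemma inv321_moved_in_range: "p i \<noteq> i \<Longrightarrow> i \<in> {1..m} \<and> p i \<in> {1..m}"
  using inv321_permutes permutes_not_in permutes_in_image by metis

lemma inv321_no321: "1 \<le> i \<Longrightarrow> i < j \<Longrightarrow> j < k \<Longrightarrow> k \<le> m \<Longrightarrow> p j < p i \<Longrightarrow> p k < p j \<Longrightarrow> False"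
  using p unfolding inv321_def avoids321_def by blast

lemma inv321_no_fixed_inside: "p f = f \<Longrightarrow> a < f \<Longrightarrow> f < p a \<Longrightarrow> False"
  using inv321_no321[of a f "p a"] inv321_moved_in_range[of a] by fastforce

lemma inv321_Up_mono:
  assumes ab: "a < b" and a: "a < p a" and b: "b < p b"
  shows "p a < p b"
proof (rule ccontr)
  assume "\<not> p a < p b"
  moreover have "p a \<noteq> p b"
    using ab by (metis inv321_involution less_irrefl)
  ultimately have "p b < p a"
    by simp
  moreover have "1 \<le> a" "p b \<le> m"
    using inv321_moved_in_range[of a] inv321_moved_in_range[of b] a b by auto
  ultimately show False
    using inv321_no321[of a b "p b"] ab b by simp
qed

lemma inv321_descent_iff:
  assumes i: "1 \<le> i" "i < m"
  shows "p (Suc i) < p i \<longleftrightarrow> step_of p i = Up \<and> step_of p (Suc i) = Down"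
proof
  assume desc: "p (Suc i) < p i"
  have "i < p i"
  proof (rule ccontr)
    assume "\<not> i < p i"
    then consider "p i = i" | "p i < i"
      by linarith
    then show False
    proof cases
      case 1
      then show False
        using inv321_no_fixed_inside[of i "p (Suc i)"] desc by simp
    next
      case 2
      then have "1 \<le> p (Suc i)"
        using desc inv321_moved_in_range[of "Suc i"] by fastforce
      then show False
        using inv321_no321[of "p (Suc i)" "p i" i] i desc 2 by simp
    qed
  qed
  moreover have "p (Suc i) < Suc i"
  proof (rule ccontr)
    assume "\<not> p (Suc i) < Suc i"
    then consider "p (Suc i) = Suc i" | "Suc i < p (Suc i)"
      by linarith
    then show False
    proof cases
      case 1
      then show False
        using inv321_no_fixed_inside[of "Suc i" i] desc by simp
    next
      case 2
      have "p i \<le> m"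
        using \<open>i < p i\<close> inv321_moved_in_range[of i] by simp
      then show False
        using inv321_no321[of "Suc i" "p (Suc i)" "p i"] i desc 2 by simp
    qed
  qed
  ultimately show "step_of p i = Up \<and> step_of p (Suc i) = Down"
    by (simp add: step_of_Up step_of_Down)
next
  assume "step_of p i = Up \<and> step_of p (Suc i) = Down"
  then show "p (Suc i) < p i"
    by (simp add: step_of_Up step_of_Down)
qed

lemma inv321_count_Up_le_Down:
  assumes "\<And>a. 1 \<le> a \<Longrightarrow> a \<le> t \<Longrightarrow> a < p a \<Longrightarrow> p a \<le> t"
  shows "count_upto (step_of p) Up t \<le> count_upto (step_of p) Down t"
  unfolding count_upto_def
proof (rule card_inj_on_le)
  show "inj_on p {i \<in> {1..t}. step_of p i = Up}"
    using inv321_inj by (rule inj_on_subset) simp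
  show "p ` {i \<in> {1..t}. step_of p i = Up} \<subseteq> {i \<in> {1..t}. step_of p i = Down}"
    using assms by (auto simp: step_of_Up step_of_Down)
qed simp

lemma inv321_ballot_seq: "ballot_seq m (step_of p)"
proof -
  have Down_le_Up: "count_upto (step_of p) Down t \<le> count_upto (step_of p) Up t" for t
    unfolding count_upto_def
  proof (rule card_inj_on_le)
    show "inj_on p {i \<in> {1..t}. step_of p i = Down}"
      using inv321_inj by (rule inj_on_subset) simp
    show "p ` {i \<in> {1..t}. step_of p i = Down} \<subseteq> {i \<in> {1..t}. step_of p i = Up}"
      using inv321_moved_in_range by (fastforce simp: step_of_Up step_of_Down)
  qed simp
  have Flat: "count_upto (step_of p) Up (f - 1) = count_upto (step_of p) Down (f - 1)"
    if "1 \<le> f" and "step_of p f = Flat" for f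
  proof -
    have fixed: "p f = f"
      using that by (simp add: step_of_Flat)
    have "p a \<le> f - 1" if "a \<le> f - 1" and "a < p a" for a
    proof -
      have "a < f"
        using that \<open>1 \<le> f\<close> by linarith
      then have "p a \<noteq> f" and "\<not> f < p a"
        using fixed inv321_involution[of a] inv321_no_fixed_inside[OF fixed] by auto
      then show ?thesis
        by linarith
    qed
    then show ?thesis
      using inv321_count_Up_le_Down[of "f - 1"] Down_le_Up[of "f - 1"] by fastforce
  qed
  have "count_upto (step_of p) Up m \<le> count_upto (step_of p) Down m"
    using inv321_moved_in_range by (intro inv321_count_Up_le_Down) fastforce
  with Down_le_Up Flat show ?thesis
    unfolding ballot_seq_def by (simp add: antisym)
qed

lemma inv321_count_Down_partner:
  assumes "i < p i"
  shows "count_upto (step_of p) Down (p i) = count_upto (step_of p) Up i"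
proof -
  let ?U = "{a \<in> {1..i}. step_of p a = Up}" and ?D = "{c \<in> {1..p i}. step_of p c = Down}"
  have "p ` ?U \<subseteq> ?D"
  proof
    fix c
    assume "c \<in> p ` ?U"
    then obtain a where "a \<in> ?U" and c: "c = p a"
      by blast
    then have a: "1 \<le> a" "a \<le> i" "a < p a"
      by (simp_all add: step_of_Up)
    have "p a \<le> p i"
      using a assms inv321_Up_mono[of a i] by (cases "a = i") auto
    with a c show "c \<in> ?D"
      by (simp add: step_of_Down)
  qed
  moreover have "?D \<subseteq> p ` ?U"
  proof
    fix c
    assume c: "c \<in> ?D"
    then have "p c < c"
      by (simp add: step_of_Down)
    have "p c \<le> i"
    proof (rule ccontr)
      assume "\<not> p c \<le> i"
      then have "p i < c"
        using inv321_Up_mono[of i "p c"] assms \<open>p c < c\<close> by simp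
      with c show False
        by simp
    qed
    moreover have "1 \<le> p c"
      using \<open>p c < c\<close> inv321_moved_in_range[of c] by simp
    ultimately have "p c \<in> ?U"
      using \<open>p c < c\<close> by (simp add: step_of_Up)
    then show "c \<in> p ` ?U"
      by (rule rev_image_eqI) simp
  qed
  ultimately have image: "p ` ?U = ?D"
    by blast
  have "inj_on p ?U"
    using inv321_inj by (rule inj_on_subset) simp
  from card_image[OF this] show ?thesis
    unfolding image count_upto_def .
qed

end

lemma Least_count_upto_eqI:
  assumes "g c = x" and "count_upto g x c = r"
  shows "(LEAST c'. r \<le> count_upto g x c') = c"
proof (rule Least_equality)
  show "r \<le> count_upto g x c"
    using assms by simp
  fix y
  assume "r \<le> count_upto g x y"
  then show "c \<le> y"
    using count_upto_strict_mono[of y c g x] assms by (meson not_le)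
qed

definition partner :: "nat \<Rightarrow> (nat \<Rightarrow> step) \<Rightarrow> nat \<Rightarrow> nat" where
  "partner m g i =
     (if i \<in> {1..m} \<and> g i = Up then LEAST c. count_upto g Up i \<le> count_upto g Down c
      else if i \<in> {1..m} \<and> g i = Down then LEAST a. count_upto g Down i \<le> count_upto g Up a
      else i)"

lemma partner_step_of:
  assumes p: "p \<in> inv321 m"
  shows "partner m (step_of p) = p"
proof
  fix i
  consider (Up) "i < p i" | (Down) "p i < i" | (Flat) "p i = i"
    by linarith
  then show "partner m (step_of p) i = p i"
  proof cases
    case Up
    then have "count_upto (step_of p) Down (p i) = count_upto (step_of p) Up i"
      by (rule inv321_count_Down_partner[OF p])
    moreover have "step_of p (p i) = Down"
      using Up p by (simp add: step_of_Down)
    ultimately show ?thesis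
      using Up inv321_moved_in_range[OF p, of i]
      by (simp add: partner_def step_of_Up Least_count_upto_eqI)
  next
    case Down
    then have "count_upto (step_of p) Up (p i) = count_upto (step_of p) Down i"
      using inv321_count_Down_partner[OF p, of "p i"] p by simp
    moreover have "step_of p (p i) = Up"
      using Down p by (simp add: step_of_Up)
    ultimately show ?thesis
      using Down inv321_moved_in_range[OF p, of i]
      by (simp add: partner_def step_of_Up step_of_Down Least_count_upto_eqI)
  next
    case Flat
    then have "step_of p i = Flat"
      by (simp add: step_of_Flat)
    with Flat show ?thesis
      by (simp add: partner_def)
  qed
qed

lemma partner_outside: "i \<notin> {1..m} \<Longrightarrow> partner m g i = i"
  unfolding partner_def by auto

context
  fixes m :: nat and g :: "nat \<Rightarrow> step"
  assumes g: "ballot_seq m g"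
begin

lemma partner_Up:
  assumes i: "1 \<le> i" "i \<le> m" "g i = Up"
  shows "i < partner m g i \<and> partner m g i \<le> m \<and> g (partner m g i) = Down
    \<and> count_upto g Down (partner m g i) = count_upto g Up i"
proof -
  let ?c = "partner m g i"
  have "1 \<le> count_upto g Up i"
    using count_upto_strict_mono[of 0 i g Up] i by simp
  moreover have "count_upto g Up i \<le> count_upto g Down m"
    using count_upto_mono[of i m g Up] g i by (simp add: ballot_seq_def)
  moreover have "?c = (LEAST c. count_upto g Up i \<le> count_upto g Down c)"
    using i by (simp add: partner_def)
  ultimately have c: "1 \<le> ?c" "?c \<le> m" "count_upto g Down ?c = count_upto g Up i" "g ?c = Down"
    using Least_count_upto by blast+
  have "i < ?c"
  proof (rule ccontr)
    assume "\<not> i < ?c"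
    moreover have "?c \<noteq> i"
      using c(4) i(3) by auto
    ultimately have "?c < i"
      by simp
    then have "count_upto g Up ?c < count_upto g Up i"
      using count_upto_strict_mono i by blast
    moreover have "count_upto g Down ?c \<le> count_upto g Up ?c"
      using g c(2) unfolding ballot_seq_def by blast
    ultimately show False
      using c by simp
  qed
  with c show ?thesis
    by simp
qed

lemma partner_Down:
  assumes i: "1 \<le> i" "i \<le> m" "g i = Down"
  shows "1 \<le> partner m g i \<and> partner m g i < i \<and> g (partner m g i) = Up
    \<and> count_upto g Up (partner m g i) = count_upto g Down i"
proof -
  let ?c = "partner m g i"
  have "1 \<le> count_upto g Down i"
    using count_upto_strict_mono[of 0 i g Down] i by simp
  moreover have "count_upto g Down i \<le> count_upto g Up i"
    using g i by (simp add: ballot_seq_def)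
  moreover have "?c = (LEAST c. count_upto g Down i \<le> count_upto g Up c)"
    using i by (simp add: partner_def)
  ultimately have c: "1 \<le> ?c" "?c \<le> i" "count_upto g Up ?c = count_upto g Down i" "g ?c = Up"
    using Least_count_upto by blast+
  then have "?c \<noteq> i"
    using i by auto
  with c show ?thesis
    by simp
qed

lemma partner_partner [simp]: "partner m g (partner m g i) = i"
proof (cases "i \<in> {1..m}")
  case True
  consider "g i = Up" | "g i = Down" | "g i = Flat"
    by (cases "g i") auto
  then show ?thesis
  proof cases
    case 1
    then show ?thesis
      using True partner_Up[of i] by (simp add: partner_def Least_count_upto_eqI)
  next
    case 2
    then show ?thesis
      using True partner_Down[of i] by (simp add: partner_def Least_count_upto_eqI)
  next
    case 3
    then show ?thesis
      by (simp add: partner_def)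
  qed
qed (simp add: partner_outside)

lemma step_of_partner: "i \<in> {1..m} \<Longrightarrow> step_of (partner m g) i = g i"
  using partner_Up[of i] partner_Down[of i]
  by (cases "g i") (auto simp: step_of_def partner_def)

lemma partner_Up_iff: "i < partner m g i \<longleftrightarrow> i \<in> {1..m} \<and> g i = Up"
proof
  assume up: "i < partner m g i"
  then have "i \<in> {1..m}"
    using partner_outside[of i] by fastforce
  moreover have "step_of (partner m g) i = Up"
    using up by (simp add: step_of_Up)
  ultimately show "i \<in> {1..m} \<and> g i = Up"
    using step_of_partner[of i] by simp
qed (use partner_Up in auto)

lemma partner_Down_iff: "partner m g i < i \<longleftrightarrow> i \<in> {1..m} \<and> g i = Down"
proof
  assume down: "partner m g i < i"
  then have "i \<in> {1..m}"
    using partner_outside[of i] by fastforce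
  moreover have "step_of (partner m g) i = Down"
    using down by (simp add: step_of_Down)
  ultimately show "i \<in> {1..m} \<and> g i = Down"
    using step_of_partner[of i] by simp
qed (use partner_Down in auto)

lemma partner_permutes: "partner m g permutes {1..m}"
  unfolding permutes_def
proof (intro conjI allI impI)
  fix y
  show "\<exists>!x. partner m g x = y"
  proof
    show "partner m g (partner m g y) = y"
      by simp
  next
    fix x
    assume "partner m g x = y"
    then show "x = partner m g y"
      by (metis partner_partner)
  qed
qed (simp add: partner_outside)

lemma partner_Up_mono:
  assumes "a < b" and "a < partner m g a" and "b < partner m g b"
  shows "partner m g a < partner m g b"
proof -
  have "a \<in> {1..m}" "g a = Up" "b \<in> {1..m}" "g b = Up"
    using assms partner_Up_iff by auto
  then have "count_upto g Down (partner m g a) < count_upto g Down (partner m g b)"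
    using partner_Up[of a] partner_Up[of b] count_upto_strict_mono[OF \<open>a < b\<close>, of g Up] by simp
  then show ?thesis
    using count_upto_mono[of "partner m g b" "partner m g a" g Down] by linarith
qed

lemma partner_Down_mono:
  assumes "a < b" and "partner m g a < a" and "partner m g b < b"
  shows "partner m g a < partner m g b"
proof -
  have "a \<in> {1..m}" "g a = Down" "b \<in> {1..m}" "g b = Down"
    using assms partner_Down_iff by auto
  then have "count_upto g Up (partner m g a) < count_upto g Up (partner m g b)"
    using partner_Down[of a] partner_Down[of b] count_upto_strict_mono[OF \<open>a < b\<close>, of g Down]
    by simp
  then show ?thesis
    using count_upto_mono[of "partner m g b" "partner m g a" g Up] by linarith
qed

lemma partner_no_fixed_inside:
  assumes inside: "a < f" "f < partner m g a"
  shows "partner m g f \<noteq> f"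
proof
  assume fixed: "partner m g f = f"
  have a: "1 \<le> a" "a \<le> m" "g a = Up"
    using inside partner_Up_iff[of a] by auto
  then have pa: "partner m g a \<le> m" "g (partner m g a) = Down"
      "count_upto g Down (partner m g a) = count_upto g Up a"
    using partner_Up[of a] by auto
  have f: "1 \<le> f" "f \<le> m"
    using a pa inside by linarith+
  moreover have "step_of (partner m g) f = Flat"
    using fixed by (simp add: step_of_Flat)
  ultimately have "g f = Flat"
    using step_of_partner[of f] by simp
  then have "count_upto g Up (f - 1) = count_upto g Down (f - 1)"
    using g f unfolding ballot_seq_def by simp
  moreover have "count_upto g Up a \<le> count_upto g Up (f - 1)"
    using inside by (intro count_upto_mono) simp
  moreover have "count_upto g Down (f - 1) < count_upto g Down (partner m g a)"
    using inside pa(2) by (intro count_upto_strict_mono) simp_all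
  ultimately show False
    using pa(3) by simp
qed

lemma partner_in_inv321: "partner m g \<in> inv321 m"
proof -
  have "involution (partner m g)"
    by (simp add: involution_def fun_eq_iff)
  moreover have "avoids321 m (partner m g)"
    using partner_Up_mono partner_Down_mono partner_no_fixed_inside by (rule avoids321I)
  ultimately show ?thesis
    using partner_permutes by (simp add: inv321_def)
qed

end

lemma ballot_seq_cong:
  "(\<And>i. 1 \<le> i \<Longrightarrow> i \<le> m \<Longrightarrow> g i = g' i) \<Longrightarrow> ballot_seq m g \<longleftrightarrow> ballot_seq m g'"
proof -
  assume eq: "\<And>i. 1 \<le> i \<Longrightarrow> i \<le> m \<Longrightarrow> g i = g' i"
  have counts: "count_upto g x t = count_upto g' x t" if "t \<le> m" for x t
    using that eq by (intro count_upto_cong) simp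
  have "count_upto g x (i - 1) = count_upto g' x (i - 1)" if "i \<in> {1..m}" for x i
    using that by (intro counts) auto
  with eq counts show ?thesis
    unfolding ballot_seq_def by simp
qed

definition perm_word :: "nat \<Rightarrow> (nat \<Rightarrow> nat) \<Rightarrow> step list" where
  "perm_word m p = map (step_of p) [1..<Suc m]"

lemma length_perm_word [simp]: "length (perm_word m p) = m"
  by (simp add: perm_word_def)

lemma step_at_perm_word: "i \<in> {1..m} \<Longrightarrow> step_at (perm_word m p) i = step_of p i"
  by (cases i) (simp_all add: perm_word_def step_at_def del: upt_Suc)

lemma perm_word_eq_iff:
  "perm_word m p = xs \<longleftrightarrow> length xs = m \<and> (\<forall>i \<in> {1..m}. step_of p i = step_at xs i)"
proof
  assume steps: "length xs = m \<and> (\<forall>i \<in> {1..m}. step_of p i = step_at xs i)"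
  have "perm_word m p ! i = xs ! i" if "i < m" for i
  proof -
    have "Suc i \<in> {1..m}"
      using that by simp
    then show ?thesis
      using steps step_at_perm_word[of "Suc i" m p] by (simp add: step_at_def)
  qed
  with steps show "perm_word m p = xs"
    by (intro nth_equalityI) simp_all
qed (auto simp: step_at_perm_word)

lemma perm_word_balanced: "p \<in> inv321 m \<Longrightarrow> perm_word m p \<in> balanced m"
  unfolding balanced_iff_ballot_seq
  using inv321_ballot_seq ballot_seq_cong[of m "step_at (perm_word m p)" "step_of p"]
  by (simp add: step_at_perm_word)

lemma perm_word_inj_on: "inj_on (perm_word m) (inv321 m)"
proof (rule inj_onI)
  fix p p'
  assume p: "p \<in> inv321 m" and p': "p' \<in> inv321 m" and eq: "perm_word m p = perm_word m p'"
  have "step_of p i = step_of p' i" for i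
  proof (cases "i \<in> {1..m}")
    case True
    then show ?thesis
      using eq step_at_perm_word[of i m p] step_at_perm_word[of i m p'] by simp
  next
    case False
    then have "p i = i" "p' i = i"
      using inv321_moved_in_range[OF p, of i] inv321_moved_in_range[OF p', of i] by auto
    then show ?thesis
      by (simp add: step_of_def)
  qed
  then have "step_of p = step_of p'" ..
  then have "partner m (step_of p) = partner m (step_of p')"
    by (rule arg_cong)
  then show "p = p'"
    unfolding partner_step_of[OF p] partner_step_of[OF p'] .
qed

lemma perm_word_surj: "xs \<in> balanced m \<Longrightarrow> xs \<in> perm_word m ` inv321 m"
proof -
  let ?g = "step_at xs"
  assume "xs \<in> balanced m"
  then have len: "length xs = m" and g: "ballot_seq m ?g"
    by (simp_all add: balanced_iff_ballot_seq)
  have "perm_word m (partner m ?g) = xs"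
    using len step_of_partner[OF g] by (simp add: perm_word_eq_iff)
  then show ?thesis
    using partner_in_inv321[OF g] by (rule image_eqI[OF sym])
qed

lemma bij_betw_perm_word: "bij_betw (perm_word m) (inv321 m) (balanced m)"
  unfolding bij_betw_def
proof (intro conjI perm_word_inj_on subset_antisym subsetI)
  show "xs \<in> balanced m" if "xs \<in> perm_word m ` inv321 m" for xs
    using that perm_word_balanced by auto
qed (rule perm_word_surj)

lemma fp_eq_count_Flat: "fp m p = count_list (perm_word m p) Flat"
proof -
  have "count_list (perm_word m p) Flat = count_upto (step_at (perm_word m p)) Flat m"
    using count_list_take[of m "perm_word m p" Flat] by simp
  also have "\<dots> = count_upto (step_of p) Flat m"
    by (intro count_upto_cong) (simp add: step_at_perm_word)
  finally show ?thesis
    by (simp add: fp_def count_upto_def step_of_Flat)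
qed

lemma maj_eq_word_maj:
  assumes p: "p \<in> inv321 m"
  shows "maj m p = word_maj (perm_word m p)"
proof -
  let ?w = "perm_word m p"
  have "{i. 1 \<le> i \<and> i < m \<and> p (Suc i) < p i}
      = {i. 1 \<le> i \<and> i < length ?w \<and> ?w ! (i - 1) = Up \<and> ?w ! i = Down}"
  proof (intro Collect_cong)
    fix i
    show "(1 \<le> i \<and> i < m \<and> p (Suc i) < p i)
        \<longleftrightarrow> (1 \<le> i \<and> i < length ?w \<and> ?w ! (i - 1) = Up \<and> ?w ! i = Down)"
    proof (cases "1 \<le> i \<and> i < m")
      case True
      then have "?w ! (i - 1) = step_of p i" "?w ! i = step_of p (Suc i)"
        using step_at_perm_word[of i m p] step_at_perm_word[of "Suc i" m p]
        by (simp_all add: step_at_def)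
      with True show ?thesis
        using inv321_descent_iff[OF p, of i] by simp
    qed auto
  qed
  then show ?thesis
    unfolding maj_def word_maj_def by simp
qed

lemma sum_inv321_eq_sum_balanced:
  "(\<Sum>p \<in> {p \<in> inv321 m. P (fp m p)}. q ^ maj m p)
     = (\<Sum>xs \<in> {xs \<in> balanced m. P (count_list xs Flat)}. q ^ word_maj xs)"
proof -
  have "bij_betw (perm_word m) {p \<in> inv321 m. P (fp m p)} {xs \<in> balanced m. P (count_list xs Flat)}"
    using bij_betw_perm_word by (rule bij_betw_Collect) (simp add: fp_eq_count_Flat)
  then have "(\<Sum>p \<in> {p \<in> inv321 m. P (fp m p)}. q ^ word_maj (perm_word m p))
      = (\<Sum>xs \<in> {xs \<in> balanced m. P (count_list xs Flat)}. q ^ word_maj xs)"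
    by (rule sum.reindex_bij_betw)
  then show ?thesis
    by (simp add: maj_eq_word_maj)
qed

lemma finite_balanced: "finite (balanced m)"
  by (rule finite_subset[OF _ finite_step_lists[of m]]) (auto simp: balanced_def)

lemma count_list_steps: "count_list xs Up + count_list xs Down + count_list xs Flat = length xs"
proof (induction xs)
  case (Cons x xs)
  then show ?case
    by (cases x) auto
qed simp

lemma balanced_count_Flat:
  "xs \<in> balanced m \<Longrightarrow> count_list xs Flat = m - 2 * count_list xs Down \<and> 2 * count_list xs Down \<le> m"
  using count_list_steps[of xs] by (auto simp: balanced_def)

lemma balanced_Down_eq: "{xs \<in> balanced m. count_list xs Down = d} = paths m d 0"
  by (auto simp: balanced_def paths_def)

lemma sum_balanced_Down_eq:
  fixes q :: "'a::comm_ring_1"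
  shows "2 * d \<le> m \<Longrightarrow> (\<Sum>xs \<in> {xs \<in> balanced m. count_list xs Down = d}. q ^ word_maj xs) = qballot q m d"
  unfolding balanced_Down_eq by (rule sum_paths_ground)

lemma sum_balanced_Down_le:
  fixes q :: "'a::comm_ring_1"
  assumes "2 * a \<le> m"
  shows "(\<Sum>xs \<in> {xs \<in> balanced m. count_list xs Down \<le> a}. q ^ word_maj xs) = qbinom q m a"
proof -
  let ?S = "{xs \<in> balanced m. count_list xs Down \<le> a}"
  have "(\<Sum>xs \<in> ?S. q ^ word_maj xs) = (\<Sum>d \<le> a. \<Sum>xs \<in> {xs \<in> ?S. count_list xs Down = d}. q ^ word_maj xs)"
    using finite_balanced by (intro sum.group[symmetric]) auto
  also have "\<dots> = (\<Sum>d \<le> a. qballot q m d)"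
  proof (rule sum.cong)
    fix d
    assume "d \<in> {..a}"
    then have "{xs \<in> ?S. count_list xs Down = d} = {xs \<in> balanced m. count_list xs Down = d}"
      and "2 * d \<le> m"
      using assms by auto
    then show "(\<Sum>xs \<in> {xs \<in> ?S. count_list xs Down = d}. q ^ word_maj xs) = qballot q m d"
      by (simp add: sum_balanced_Down_eq)
  qed simp
  also have "\<dots> = qbinom q m a"
    by (rule sum_qballot)
  finally show ?thesis .
qed

lemma sum_inv321_fp_ge:
  fixes q :: "'a::comm_ring_1"
  assumes "a \<le> b"
  shows "(\<Sum>\<pi> \<in> {\<pi> \<in> inv321 (a + b). b - a \<le> fp (a + b) \<pi>}. q ^ maj (a + b) \<pi>) = qbinom q (a + b) a"
proof -
  have "(\<Sum>\<pi> \<in> {\<pi> \<in> inv321 (a + b). b - a \<le> fp (a + b) \<pi>}. q ^ maj (a + b) \<pi>)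
      = (\<Sum>xs \<in> {xs \<in> balanced (a + b). b - a \<le> count_list xs Flat}. q ^ word_maj xs)"
    by (rule sum_inv321_eq_sum_balanced)
  also have "{xs \<in> balanced (a + b). b - a \<le> count_list xs Flat}
      = {xs \<in> balanced (a + b). count_list xs Down \<le> a}"
    using assms balanced_count_Flat by fastforce
  also have "(\<Sum>xs \<in> \<dots>. q ^ word_maj xs) = qbinom q (a + b) a"
    using assms by (intro sum_balanced_Down_le) simp
  finally show ?thesis .
qed

lemma sum_inv321_fp_eq:
  fixes q :: "'a::comm_ring_1"
  assumes "l \<le> n" and "even (n - l)"
  shows "(\<Sum>\<pi> \<in> {\<pi> \<in> inv321 n. fp n \<pi> = l}. q ^ maj n \<pi>) = qballot q n ((n - l) div 2)"
proof -
  define k where "k = (n - l) div 2"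
  have k: "2 * k = n - l"
    using assms(2) unfolding k_def by (metis dvd_mult_div_cancel)
  have "(\<Sum>\<pi> \<in> {\<pi> \<in> inv321 n. fp n \<pi> = l}. q ^ maj n \<pi>)
      = (\<Sum>xs \<in> {xs \<in> balanced n. count_list xs Flat = l}. q ^ word_maj xs)"
    by (rule sum_inv321_eq_sum_balanced)
  also have "{xs \<in> balanced n. count_list xs Flat = l} = {xs \<in> balanced n. count_list xs Down = k}"
    using k assms(1) balanced_count_Flat by fastforce
  also have "(\<Sum>xs \<in> \<dots>. q ^ word_maj xs) = qballot q n k"
    using k by (intro sum_balanced_Down_eq) simp
  finally show ?thesis
    by (simp add: k_def)
qed

theorem mainTheorem13:
  fixes q :: "'a::comm_ring_1"
  shows "(\<forall>a b. a \<le> b \<longrightarrow>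
            (\<Sum>\<pi> \<in> {\<pi> \<in> inv321 (a + b). fp (a + b) \<pi> \<ge> b - a}. q ^ maj (a + b) \<pi>)
              = qbinom q (a + b) a)
       \<and> (\<forall>n l. l \<le> n \<and> even (n - l) \<longrightarrow>
            (\<Sum>\<pi> \<in> {\<pi> \<in> inv321 n. fp n \<pi> = l}. q ^ maj n \<pi>)
              = qbinom q n ((n - l) div 2)
                - (if (n - l) div 2 = 0 then 0 else qbinom q n ((n - l) div 2 - 1)))"
  by (auto simp: sum_inv321_fp_ge sum_inv321_fp_eq qballot_def)

end
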